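(* Let $n\ge 3$, let $\mathcal{S}\subseteq(\mathbb{C}^d)^{\otimes n}$ be the permutation-symmetric subspace, and let $X,Y$ be $d\times d$ complex matrices. Suppose $|\psi\rangle\in\mathcal{S}$, $X_{(1)}|\psi\rangle\in\mathcal{S}$ and $Y_{(2)}|\psi\rangle\in\mathcal{S}$. Then $[X_{(1)},Y_{(1)}]|\psi\rangle=0$.
   Context: $\mathcal{S}$ is the set of vectors in $(\mathbb{C}^d)^{\otimes n}$ invariant under all permutations of the $n$ tensor factors. For a $d\times d$ matrix $X$ and $1\le k\le n$, $X_{(k)}$ denotes the operator on $(\mathbb{C}^d)^{\otimes n}$ acting as $X$ on the $k$-th tensor factor and as the identity on all others. $[P,Q]=PQ-QP$. *)

theory Defs
  imports "HOL-Analysis.Analysis" "HOL-Combinatorics.Permutations"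
begin

text \<open>A vector of (C^d)^{tensor n} is modelled as a function on basis labels:
  basis vectors are lists of length n over the index type 'd (CARD('d) = d);
  entries on lists of other length are required to vanish.\<close>

definition in_tensor_space :: "nat \<Rightarrow> ('d::finite list \<Rightarrow> complex) \<Rightarrow> bool" where
  "in_tensor_space n \<psi> \<longleftrightarrow> (\<forall>xs. length xs \<noteq> n \<longrightarrow> \<psi> xs = 0)"

definition sym_subspace :: "nat \<Rightarrow> ('d::finite list \<Rightarrow> complex) set" where
  "sym_subspace n = {\<psi>. in_tensor_space n \<psi> \<and>
     (\<forall>p xs. p permutes {..<n} \<longrightarrow> length xs = n \<longrightarrow> \<psi> (permute_list p xs) = \<psi> xs)}"

text \<open>X_(k): X acting on the k-th tensor factor (k is 1-based, 1 \<le> k \<le> n).\<close>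
definition factor_op :: "nat \<Rightarrow> nat \<Rightarrow> complex^'d::finite^'d \<Rightarrow> ('d list \<Rightarrow> complex) \<Rightarrow> ('d list \<Rightarrow> complex)" where
  "factor_op n k X \<psi> = (\<lambda>xs. if length xs = n
      then (\<Sum>j\<in>UNIV. X $ (xs ! (k - 1)) $ j * \<psi> (xs[k - 1 := j])) else 0)"

end

theory Submission
  imports Defs
begin

text \<open>If \<psi> and X_(a) \<psi> are both symmetric, conjugating by the swap of the factors a and b
  shows X_(a) \<psi> = X_(b) \<psi> for every b. Hence Y_(1) \<psi> = Y_(2) \<psi> and X_(1) \<psi> = X_(3) \<psi>, and since
  operators on different factors commute,
  X_(1) Y_(1) \<psi> = Y_(2) X_(3) \<psi> = X_(3) Y_(1) \<psi> = Y_(1) X_(1) \<psi>;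
  the spare third factor is where n \<ge> 3 is needed.\<close>

lemma factor_op_commute:
  assumes "k \<ge> 1" "l \<ge> 1" "k \<noteq> l"
  shows "factor_op n k X (factor_op n l Y \<phi>) = factor_op n l Y (factor_op n k X \<phi>)"
proof (rule ext)
  fix xs :: "'a list"
  show "factor_op n k X (factor_op n l Y \<phi>) xs = factor_op n l Y (factor_op n k X \<phi>) xs"
  proof (cases "length xs = n")
    case False
    then show ?thesis by (simp add: factor_op_def)
  next
    case True
    have ne: "k - 1 \<noteq> l - 1" using assms by simp
    have "factor_op n k X (factor_op n l Y \<phi>) xs =
      (\<Sum>j\<in>UNIV. \<Sum>i\<in>UNIV. X $ (xs ! (k - 1)) $ j * (Y $ (xs ! (l - 1)) $ i * \<phi> (xs[k - 1 := j, l - 1 := i])))"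
      using True ne by (simp add: factor_op_def sum_distrib_left)
    also have "\<dots> = (\<Sum>i\<in>UNIV. \<Sum>j\<in>UNIV. X $ (xs ! (k - 1)) $ j * (Y $ (xs ! (l - 1)) $ i * \<phi> (xs[k - 1 := j, l - 1 := i])))"
      by (rule sum.swap)
    also have "\<dots> = factor_op n l Y (factor_op n k X \<phi>) xs"
      using True ne by (simp add: factor_op_def sum_distrib_left list_update_swap mult.left_commute)
    finally show ?thesis .
  qed
qed

lemma permute_list_transpose_nth:
  assumes "i < length xs" "j < length xs"
  shows "permute_list (Transposition.transpose i j) xs ! i = xs ! j"
  using assms by (simp add: permute_list_nth permutes_swap_id)

lemma permute_list_transpose_update:
  assumes "i < length xs" "j < length xs"
  shows "(permute_list (Transposition.transpose i j) xs)[i := y] = permute_list (Transposition.transpose i j) (xs[j := y])"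
proof (rule nth_equalityI)
  have perm: "Transposition.transpose i j permutes {..<length xs}"
    using assms by (intro permutes_swap_id) auto
  fix k assume "k < length ((permute_list (Transposition.transpose i j) xs)[i := y])"
  then have k: "k < length xs" by simp
  then have "Transposition.transpose i j k < length xs"
    using perm permutes_in_image by fastforce
  moreover have "Transposition.transpose i j k = j \<longleftrightarrow> k = i"
    by (auto simp: transpose_eq_iff)
  ultimately show "(permute_list (Transposition.transpose i j) xs)[i := y] ! k = permute_list (Transposition.transpose i j) (xs[j := y]) ! k"
    using k perm by (cases "k = i") (simp_all add: permute_list_nth nth_list_update)
qed simp

lemma factor_op_eq_of_sym_subspace:
  assumes "\<phi> \<in> sym_subspace n" "factor_op n a X \<phi> \<in> sym_subspace n"
    and "1 \<le> a" "a \<le> n" "1 \<le> b" "b \<le> n"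
  shows "factor_op n b X \<phi> = factor_op n a X \<phi>"
proof (rule ext)
  fix xs :: "'a list"
  show "factor_op n b X \<phi> xs = factor_op n a X \<phi> xs"
  proof (cases "length xs = n")
    case False
    then show ?thesis by (simp add: factor_op_def)
  next
    case True
    define p where "p = Transposition.transpose (a - 1) (b - 1)"
    have idx: "a - 1 < length xs" "b - 1 < length xs" using True assms by auto
    have p: "p permutes {..<n}" unfolding p_def using assms by (intro permutes_swap_id) auto
    have sym_\<phi>: "\<phi> (permute_list p ys) = \<phi> ys" if "length ys = n" for ys
      using assms(1) p that by (simp add: sym_subspace_def)
    have sym_X\<phi>: "factor_op n a X \<phi> (permute_list p xs) = factor_op n a X \<phi> xs"
      using assms(2) p True by (simp add: sym_subspace_def)
    have "factor_op n a X \<phi> xs = factor_op n a X \<phi> (permute_list p xs)"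
      using sym_X\<phi> by simp
    also have "\<dots> = (\<Sum>j\<in>UNIV. X $ (xs ! (b - 1)) $ j * \<phi> (permute_list p (xs[b - 1 := j])))"
      using True idx unfolding p_def
      by (simp add: factor_op_def permute_list_transpose_nth permute_list_transpose_update)
    also have "\<dots> = factor_op n b X \<phi> xs"
      using True sym_\<phi> by (simp add: factor_op_def)
    finally show ?thesis by simp
  qed
qed

theorem lemma3:
  fixes n :: nat and X Y :: "complex^'d::finite^'d" and \<psi> :: "'d list \<Rightarrow> complex"
  assumes "n \<ge> 3"
    and "\<psi> \<in> sym_subspace n"
    and "factor_op n 1 X \<psi> \<in> sym_subspace n"
    and "factor_op n 2 Y \<psi> \<in> sym_subspace n"
  shows "factor_op n 1 X (factor_op n 1 Y \<psi>) - factor_op n 1 Y (factor_op n 1 X \<psi>) = (\<lambda>_. 0)"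
proof -
  have Y12: "factor_op n 1 Y \<psi> = factor_op n 2 Y \<psi>"
    by (rule factor_op_eq_of_sym_subspace[OF assms(2,4)]) (use assms(1) in auto)
  have X13: "factor_op n 3 X \<psi> = factor_op n 1 X \<psi>"
    by (rule factor_op_eq_of_sym_subspace[OF assms(2,3)]) (use assms(1) in auto)
  have "factor_op n 1 X (factor_op n 1 Y \<psi>) = factor_op n 1 X (factor_op n 2 Y \<psi>)"
    by (simp only: Y12)
  also have "\<dots> = factor_op n 2 Y (factor_op n 1 X \<psi>)" by (rule factor_op_commute) auto
  also have "\<dots> = factor_op n 2 Y (factor_op n 3 X \<psi>)" by (simp only: X13)
  also have "\<dots> = factor_op n 3 X (factor_op n 2 Y \<psi>)" by (rule factor_op_commute[symmetric]) auto
  also have "\<dots> = factor_op n 3 X (factor_op n 1 Y \<psi>)" by (simp only: Y12)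
  also have "\<dots> = factor_op n 1 Y (factor_op n 3 X \<psi>)" by (rule factor_op_commute) auto
  also have "\<dots> = factor_op n 1 Y (factor_op n 1 X \<psi>)" by (simp only: X13)
  finally show ?thesis by (simp add: fun_eq_iff)
qed

end
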